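(* Let $G$ be a simple graph with $m\ge 1$ edges and let $G'$ be an induced subgraph of $G$ formed by some blocks of $G$, with $m'\ge1$ edges. Then $\lambda_i(G)\ge\lambda_i(G')\ge\lambda_{m-m'+i}(G)$ for every $1\le i\le m'$.
   Context: A block of $G$ is a maximal connected induced subgraph without cut vertices. For an oriented edge $e$ write $e^-$ for its tail and $e^+$ for its head. For distinct edges $e,e'$: $e\leftrightarrow e'$ means $e^+=e'^-$ or $e'^+=e^-$; $e\overset{\pm}{\sim}e'$ means $e^+=e'^+$ or $e^-=e'^-$; $e\vartriangle e'$ means $e,e'$ are two edges of a common triangle. $\triangle(e)$ is the number of triangles containing $e$ in the graph under consideration. The Helmholtzian matrix $\mathcal{H}(G)=(h_{ee'})$ is indexed by edges, with $h_{ee}=\triangle(e)+2$, and for $e\ne e'$: $h_{ee'}=-1$ if $e\leftrightarrow e'$ and not $e\vartriangle e'$; $h_{ee'}=1$ if $e\overset{\pm}{\sim}e'$ and not $e\vartriangle e'$; $h_{ee'}=0$ otherwise. $\lambda_1(G)\ge\cdots\ge\lambda_m(G)$ are the eigenvalues of $\mathcal{H}(G)$ for an arbitrary edge orientation (independent of the orientation). *)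

theory Defs
  imports "Jordan_Normal_Form.Char_Poly" "HOL-Computational_Algebra.Polynomial" "HOL-Library.Product_Lexorder"
begin

definition simple_graph :: "'a set \<Rightarrow> 'a set set \<Rightarrow> bool" where
  "simple_graph V E \<longleftrightarrow> finite V \<and> (\<forall>e\<in>E. e \<subseteq> V \<and> card e = 2)"

definition connected_on :: "'a set set \<Rightarrow> 'a set \<Rightarrow> bool" where
  "connected_on E S \<longleftrightarrow> S \<noteq> {} \<and>
     (\<forall>x\<in>S. \<forall>y\<in>S. (x, y) \<in> {(u, v). u \<in> S \<and> v \<in> S \<and> {u, v} \<in> E}\<^sup>*)"

definition no_cut_vertex :: "'a set set \<Rightarrow> 'a set \<Rightarrow> bool" where
  "no_cut_vertex E S \<longleftrightarrow> (\<forall>v\<in>S. S - {v} \<noteq> {} \<longrightarrow> connected_on E (S - {v}))"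

definition is_block :: "'a set \<Rightarrow> 'a set set \<Rightarrow> 'a set \<Rightarrow> bool" where
  "is_block V E B \<longleftrightarrow> B \<subseteq> V \<and> connected_on E B \<and> no_cut_vertex E B \<and>
     (\<forall>T. B \<subset> T \<and> T \<subseteq> V \<longrightarrow> \<not> (connected_on E T \<and> no_cut_vertex E T))"

definition induced_edges :: "'a set set \<Rightarrow> 'a set \<Rightarrow> 'a set set" where
  "induced_edges E S = {e \<in> E. e \<subseteq> S}"

text \<open>Oriented edges: each edge {u,v} with u < v is oriented u \<rightarrow> v (the spectrum
  does not depend on the orientation).\<close>
definition oriented_edges :: "('a::linorder) set set \<Rightarrow> ('a \<times> 'a) set" where
  "oriented_edges E = {(u, v). {u, v} \<in> E \<and> u < v}"

definition is_triangle :: "'a set set \<Rightarrow> 'a set \<Rightarrow> bool" where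
  "is_triangle E t \<longleftrightarrow> card t = 3 \<and> (\<forall>x\<in>t. \<forall>y\<in>t. x \<noteq> y \<longrightarrow> {x, y} \<in> E)"

definition tri_count :: "'a set set \<Rightarrow> 'a \<times> 'a \<Rightarrow> nat" where
  "tri_count E e = card {t. is_triangle E t \<and> fst e \<in> t \<and> snd e \<in> t}"

definition in_common_triangle :: "'a set set \<Rightarrow> 'a \<times> 'a \<Rightarrow> 'a \<times> 'a \<Rightarrow> bool" where
  "in_common_triangle E e e' \<longleftrightarrow>
     (\<exists>t. is_triangle E t \<and> {fst e, snd e} \<subseteq> t \<and> {fst e', snd e'} \<subseteq> t)"

text \<open>Entries of the Helmholtzian (tail = fst, head = snd).\<close>
definition helm_entry :: "'a set set \<Rightarrow> 'a \<times> 'a \<Rightarrow> 'a \<times> 'a \<Rightarrow> real" where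
  "helm_entry E e e' =
     (if e = e' then real (tri_count E e) + 2
      else if (snd e = fst e' \<or> snd e' = fst e) \<and> \<not> in_common_triangle E e e' then -1
      else if (snd e = snd e' \<or> fst e = fst e') \<and> \<not> in_common_triangle E e e' then 1
      else 0)"

definition edge_list :: "('a::linorder) set set \<Rightarrow> ('a \<times> 'a) list" where
  "edge_list E = sorted_list_of_set (oriented_edges E)"

definition helmholtzian :: "('a::linorder) set set \<Rightarrow> real mat" where
  "helmholtzian E = (let es = edge_list E in
     mat (length es) (length es) (\<lambda>(i, j). helm_entry E (es ! i) (es ! j)))"

text \<open>Eigenvalues (with algebraic multiplicity) in non-increasing order; lambda E i for i \<ge> 1.\<close>
definition eigs_desc :: "('a::linorder) set set \<Rightarrow> real list" where
  "eigs_desc E = rev (sorted_list_of_multiset (proots (char_poly (helmholtzian E))))"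

definition helm_lambda :: "('a::linorder) set set \<Rightarrow> nat \<Rightarrow> real" where
  "helm_lambda E i = eigs_desc E ! (i - 1)"

end

theory Submission
  imports Defs
begin

text \<open>The Helmholtzian of \<open>G'\<close> is a principal submatrix of that of \<open>G\<close>. Indeed, a vertex
  adjacent to two vertices of a block lies in the block, so every triangle of \<open>G\<close> through an
  edge of a block lies inside that block; hence triangle counts and the relation of being two
  edges of a common triangle are the same in \<open>G\<close> and \<open>G'\<close> for the edges of \<open>G'\<close>.

  The inequalities are then Cauchy's interlacing theorem for a principal submatrix \<open>B\<close> of a
  real symmetric matrix \<open>A\<close>. Take orthonormal eigenbases of \<open>A\<close> and \<open>B\<close> (spectral theorem,
  by Householder deflation), eigenvalues in non-increasing order. For \<open>\<lambda>\<^sub>i(B) \<le> \<lambda>\<^sub>i(A)\<close>, the span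
  of the last \<open>n - i + 1\<close> eigenvectors of \<open>A\<close> and the zero extension of the span of the first
  \<open>i\<close> eigenvectors of \<open>B\<close> meet in a nonzero vector \<open>x\<close>, and comparing the Rayleigh quotient of
  \<open>x\<close> for \<open>A\<close> and for \<open>B\<close> gives the bound. The other inequality is symmetric.\<close>

section \<open>Real symmetric matrices\<close>

lemma scalar_prod_carrier:
  "w \<in> carrier_vec n \<Longrightarrow> v \<bullet> w = (\<Sum>t<n. v $ t * w $ t)"
  by (simp add: scalar_prod_def atLeast0LessThan)

lemma index_mult_mat_vec_carrier:
  "A \<in> carrier_mat n m \<Longrightarrow> v \<in> carrier_vec m \<Longrightarrow> i < n \<Longrightarrow> (A *\<^sub>v v) $ i = (\<Sum>t<m. A $$ (i,t) * v $ t)"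
  by (simp add: scalar_prod_carrier)

lemma real_scalar_prod_self_nonneg: "0 \<le> (v :: real vec) \<bullet> v"
  unfolding scalar_prod_def by (intro sum_nonneg) simp

lemma real_scalar_prod_self_eq_0:
  fixes v :: "real vec"
  assumes "v \<in> carrier_vec n"
  shows "v \<bullet> v = 0 \<longleftrightarrow> v = 0\<^sub>v n"
proof
  assume "v \<bullet> v = 0"
  hence "\<forall>t<n. v $ t * v $ t = 0"
    using assms sum_nonneg_eq_0_iff[of "{..<n}" "\<lambda>t. v $ t * v $ t"] by (simp add: scalar_prod_carrier)
  thus "v = 0\<^sub>v n" using assms by (intro eq_vecI) auto
qed (use assms in simp)

definition symmetric_mat :: "'a mat \<Rightarrow> bool" where
  "symmetric_mat A \<longleftrightarrow> transpose_mat A = A"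

lemma symmetric_matD:
  assumes "A \<in> carrier_mat n n" "symmetric_mat A" "i < n" "j < n"
  shows "A $$ (i,j) = A $$ (j,i)"
  using assms index_transpose_mat(1)[of j A i] unfolding symmetric_mat_def by auto

lemma symmetric_matI:
  assumes "A \<in> carrier_mat n n" "\<And>i j. i < n \<Longrightarrow> j < n \<Longrightarrow> A $$ (i,j) = A $$ (j,i)"
  shows "symmetric_mat A"
  unfolding symmetric_mat_def by (rule eq_matI) (use assms in auto)

lemma symmetric_mat_conj:
  fixes A H :: "'a::comm_semiring_0 mat"
  assumes "A \<in> carrier_mat n n" "H \<in> carrier_mat n n" "symmetric_mat A" "symmetric_mat H"
  shows "symmetric_mat (H * A * H)"
proof -
  have "transpose_mat (H * (A * H)) = transpose_mat (A * H) * transpose_mat H"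
    by (rule transpose_mult) (use assms in auto)
  also have "transpose_mat (A * H) = transpose_mat H * transpose_mat A"
    by (rule transpose_mult) (use assms in auto)
  finally show ?thesis
    using assms unfolding symmetric_mat_def by (simp add: assoc_mult_mat[of _ n n _ n _ n])
qed

text \<open>The Hermitian form \<open>v\<^sup>* A v\<close> of a real symmetric matrix is real, and equals
  \<open>z |v|\<^sup>2\<close> on an eigenvector \<open>v\<close>.\<close>

lemma symmetric_mat_complex_eigenvalue_real:
  fixes A :: "real mat"
  assumes A: "A \<in> carrier_mat n n" "symmetric_mat A"
    and ev: "eigenvector (map_mat complex_of_real A) v z"
  shows "Im z = 0"
proof -
  have v: "v \<in> carrier_vec n" "v \<noteq> 0\<^sub>v n" "map_mat complex_of_real A *\<^sub>v v = z \<cdot>\<^sub>v v"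
    using ev A unfolding eigenvector_def by auto
  define s where "s = (\<Sum>i<n. \<Sum>j<n. cnj (v$i) * complex_of_real (A$$(i,j)) * v$j)"
  define N where "N = (\<Sum>i<n. (cmod (v$i))\<^sup>2)"
  have row: "(\<Sum>j<n. complex_of_real (A$$(i,j)) * v$j) = z * v$i" if "i < n" for i
    using arg_cong[OF v(3), of "\<lambda>w. w $ i"] index_mult_mat_vec_carrier[of _ n n v i] A v(1) that
    by simp
  have "s = (\<Sum>i<n. cnj (v$i) * (\<Sum>j<n. complex_of_real (A$$(i,j)) * v$j))"
    unfolding s_def by (simp add: sum_distrib_left mult.assoc)
  also have "\<dots> = z * (\<Sum>i<n. cnj (v$i) * v$i)"
    using row by (simp add: sum_distrib_left mult_ac)
  also have "\<dots> = z * complex_of_real N"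
    unfolding N_def of_real_sum by (simp add: complex_norm_square mult.commute[of "cnj _"] del: of_real_power)
  finally have "s = z * complex_of_real N" .
  moreover have "cnj s = s"
  proof -
    have "cnj s = (\<Sum>i<n. \<Sum>j<n. v$i * complex_of_real (A$$(i,j)) * cnj (v$j))"
      unfolding s_def by simp
    also have "\<dots> = (\<Sum>j<n. \<Sum>i<n. v$i * complex_of_real (A$$(i,j)) * cnj (v$j))"
      by (rule sum.swap)
    also have "\<dots> = s"
      unfolding s_def by (intro sum.cong refl) (simp add: symmetric_matD[OF A] mult_ac)
    finally show ?thesis .
  qed
  moreover have "N > 0"
  proof -
    obtain i where "i < n" "v $ i \<noteq> 0"
      using v(1,2) by (metis eq_vecI index_zero_vec(1,2) carrier_vecD)
    thus ?thesis unfolding N_def by (intro sum_pos2[of _ i]) auto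
  qed
  ultimately have "cnj z = z" by simp
  thus ?thesis by (metis Reals_cnj_iff complex_is_Real_iff)
qed

lemma symmetric_mat_unit_eigenvector:
  fixes A :: "real mat"
  assumes A: "A \<in> carrier_mat n n" "symmetric_mat A" and n: "0 < n"
  obtains e v where "v \<in> carrier_vec n" "v \<bullet> v = 1" "A *\<^sub>v v = e \<cdot>\<^sub>v v"
proof -
  let ?C = "map_mat complex_of_real A"
  have C: "?C \<in> carrier_mat n n" using A by simp
  obtain zs where "char_poly ?C = (\<Prod>z\<leftarrow>zs. [:-z, 1:])" "length zs = n"
    using char_poly_factorized[OF C] by blast
  with n obtain z where "poly (char_poly ?C) z = 0"
    by (cases zs) auto
  then obtain w where w: "eigenvector ?C w z"
    using eigenvalue_root_char_poly[OF C] unfolding eigenvalue_def by blast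
  have "complex_of_real (Re z) = z"
    using symmetric_mat_complex_eigenvalue_real[OF A w] by (simp add: complex_eq_iff)
  moreover have "poly (char_poly ?C) (complex_of_real (Re z)) = complex_of_real (poly (char_poly A) (Re z))"
    unfolding of_real_hom.char_poly_hom[OF A(1)] by simp
  ultimately have "poly (char_poly A) (Re z) = 0"
    using \<open>poly (char_poly ?C) z = 0\<close> by simp
  then obtain u where u: "eigenvector A u (Re z)"
    using eigenvalue_root_char_poly[OF A(1)] unfolding eigenvalue_def by blast
  hence u: "u \<in> carrier_vec n" "u \<noteq> 0\<^sub>v n" "A *\<^sub>v u = Re z \<cdot>\<^sub>v u"
    using A unfolding eigenvector_def by auto
  have "u \<bullet> u > 0"
    using u(1,2) real_scalar_prod_self_nonneg[of u] real_scalar_prod_self_eq_0[OF u(1)] by linarith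
  define v where "v = (1 / sqrt (u \<bullet> u)) \<cdot>\<^sub>v u"
  have "v \<bullet> v = 1"
    using \<open>u \<bullet> u > 0\<close> u(1) by (simp add: v_def smult_scalar_prod_distrib[of _ n] scalar_prod_smult_distrib[of _ n])
  moreover have "A *\<^sub>v v = Re z \<cdot>\<^sub>v v"
    unfolding v_def using mult_mat_vec[OF A(1) u(1)] u(3) by (simp add: smult_smult_assoc mult.commute)
  ultimately show ?thesis using that[of v "Re z"] u(1) by (simp add: v_def)
qed

text \<open>Reflection in the hyperplane orthogonal to \<open>e\<^sub>0 - v\<close>. For \<open>v = e\<^sub>0\<close> the junk value
  \<open>2 / 0 = 0\<close> makes it the identity, as it should be.\<close>

definition householder :: "nat \<Rightarrow> real vec \<Rightarrow> real mat" where
  "householder n v = (let w = unit_vec n 0 - v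
     in mat n n (\<lambda>(i,j). of_bool (i = j) - 2 / (w \<bullet> w) * w $ i * w $ j))"

lemma householder_carrier: "householder n v \<in> carrier_mat n n"
  unfolding householder_def Let_def by simp

lemma symmetric_householder: "symmetric_mat (householder n v)"
  by (rule symmetric_matI[OF householder_carrier]) (simp add: householder_def Let_def)

lemma householder_involution:
  assumes v: "v \<in> carrier_vec n"
  shows "householder n v * householder n v = 1\<^sub>m n"
proof (rule eq_matI)
  define w where "w = unit_vec n 0 - v"
  define c where "c = 2 / (w \<bullet> w)"
  have w: "w \<in> carrier_vec n" using v by (simp add: w_def)
  have cc: "c * c * (w \<bullet> w) = 2 * c"
    unfolding c_def by (cases "w \<bullet> w = 0") (simp_all add: field_simps)
  have H: "householder n v $$ (i,j) = of_bool (i = j) - c * w$i * w$j" if "i < n" "j < n" for i j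
    using that by (simp add: householder_def Let_def w_def c_def)
  fix i j assume "i < dim_row (1\<^sub>m n)" "j < dim_col (1\<^sub>m n)"
  hence i: "i < n" and j: "j < n" by auto
  have "(householder n v * householder n v) $$ (i,j)
      = (\<Sum>t<n. (of_bool (i = t) - c * w$i * w$t) * (of_bool (t = j) - c * w$t * w$j))"
    using i j H householder_carrier[of n v] by (simp add: scalar_prod_carrier[of _ n])
  also have "\<dots> = (\<Sum>t<n. (if t = i then of_bool (t = j) else 0) - (if t = i then c * w$t * w$j else 0)
      - (if t = j then c * w$i * w$t else 0) + c * c * w$i * w$j * (w$t * w$t))"
    by (intro sum.cong) (auto simp: algebra_simps)
  also have "\<dots> = of_bool (i = j) - 2 * c * w$i * w$j + c * c * (w \<bullet> w) * w$i * w$j"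
    using i j by (simp add: sum.distrib sum_subtractf sum_distrib_left[symmetric] scalar_prod_carrier[OF w])
  also have "\<dots> = 1\<^sub>m n $$ (i,j)"
    using i j cc by simp
  finally show "(householder n v * householder n v) $$ (i,j) = 1\<^sub>m n $$ (i,j)" .
qed (simp_all add: householder_def Let_def)

lemma col_householder:
  assumes v: "v \<in> carrier_vec n" "v \<bullet> v = 1" and n: "0 < n"
  shows "col (householder n v) 0 = v"
proof (rule eq_vecI)
  define w where "w = unit_vec n 0 - v"
  have w: "w \<in> carrier_vec n" using v by (simp add: w_def)
  have "w \<bullet> w = (\<Sum>t<n. of_bool (t = 0) - 2 * (of_bool (t = 0) * v$t) + v$t * v$t)"
    using v by (auto simp: w_def scalar_prod_carrier[of _ n] algebra_simps intro!: sum.cong)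
  also have "\<dots> = 1 - 2 * v$0 + v \<bullet> v"
    using v n by (simp add: sum.distrib sum_subtractf sum_distrib_left[symmetric] scalar_prod_carrier[of _ n])
  finally have ww: "w \<bullet> w = 2 * w $ 0"
    using v n by (simp add: w_def)
  fix i assume "i < dim_vec v"
  hence i: "i < n" using v by simp
  have "col (householder n v) 0 $ i = of_bool (i = 0) - 2 / (w \<bullet> w) * w $ 0 * w $ i"
    using i n by (simp add: householder_def Let_def w_def[symmetric] mult_ac)
  also have "\<dots> = v $ i"
  proof (cases "w $ 0 = 0")
    case True
    hence "w \<bullet> w = 0" using ww by simp
    hence "w $ i = 0" using w i real_scalar_prod_self_eq_0 by fastforce
    thus ?thesis using True i v by (cases "i = 0") (auto simp: w_def)
  next
    case False
    thus ?thesis using ww i n v by (simp add: w_def)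
  qed
  finally show "col (householder n v) 0 $ i = v $ i" .
qed (use v in \<open>simp add: householder_def Let_def\<close>)

definition orthonormal_system :: "nat \<Rightarrow> (nat \<Rightarrow> real vec) \<Rightarrow> bool" where
  "orthonormal_system n u \<longleftrightarrow>
     (\<forall>j<n. u j \<in> carrier_vec n) \<and> (\<forall>j<n. \<forall>l<n. u j \<bullet> u l = of_bool (j = l))"

lemma orthonormal_system_carrier:
  "orthonormal_system n u \<Longrightarrow> j < n \<Longrightarrow> u j \<in> carrier_vec n"
  unfolding orthonormal_system_def by blast

definition orthonormal_eigenbasis :: "real mat \<Rightarrow> nat \<Rightarrow> (nat \<Rightarrow> real vec) \<Rightarrow> real list \<Rightarrow> bool" where
  "orthonormal_eigenbasis A n u es \<longleftrightarrow>
     orthonormal_system n u \<and> length es = n \<and> (\<forall>j<n. A *\<^sub>v u j = es ! j \<cdot>\<^sub>v u j)"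

lemma involution_conj_mult:
  fixes A H :: "'a::semiring_1 mat"
  assumes A: "A \<in> carrier_mat n n" and H: "H \<in> carrier_mat n n" "H * H = 1\<^sub>m n"
  shows "H * (H * A * H) = A * H"
proof -
  have "H * (H * A * H) = (H * H) * (A * H)"
    using A H(1) by (simp add: assoc_mult_mat[of _ n n _ n _ n])
  also have "\<dots> = 1\<^sub>m n * (A * H)"
    by (simp only: H(2))
  also have "\<dots> = A * H"
    using A H(1) by simp
  finally show ?thesis .
qed

lemma char_poly_involution_conj:
  fixes A H :: "'a::comm_ring_1 mat"
  assumes A: "A \<in> carrier_mat n n" and H: "H \<in> carrier_mat n n" "H * H = 1\<^sub>m n"
  shows "char_poly (H * A * H) = char_poly A"
proof -
  have "H * (H * A * H) * H = A"
    using involution_conj_mult[OF A H] A H by simp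
  hence "similar_mat A (H * A * H)"
    unfolding similar_mat_def similar_mat_wit_def using A H
    by (intro exI[of _ H] conjI) simp_all
  thus ?thesis by (simp add: char_poly_similar)
qed

lemma orthonormal_eigenbasis_conj:
  assumes A: "A \<in> carrier_mat n n" and H: "H \<in> carrier_mat n n" "symmetric_mat H" "H * H = 1\<^sub>m n"
    and B: "orthonormal_eigenbasis (H * A * H) n z es"
  shows "orthonormal_eigenbasis A n (\<lambda>j. H *\<^sub>v z j) es"
  unfolding orthonormal_eigenbasis_def orthonormal_system_def
proof (intro conjI allI impI)
  have z: "z j \<in> carrier_vec n" if "j < n" for j
    using B that unfolding orthonormal_eigenbasis_def orthonormal_system_def by blast
  fix j assume j: "j < n"
  show "H *\<^sub>v z j \<in> carrier_vec n" using H z[OF j] by simp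
  have "A *\<^sub>v (H *\<^sub>v z j) = (A * H) *\<^sub>v z j"
    using A H z[OF j] by simp
  also have "\<dots> = (H * (H * A * H)) *\<^sub>v z j"
    by (simp only: involution_conj_mult[OF A H(1,3)])
  also have "\<dots> = H *\<^sub>v ((H * A * H) *\<^sub>v z j)"
    by (rule assoc_mult_mat_vec[of _ n n _ n]) (use A H z[OF j] in auto)
  also have "\<dots> = es ! j \<cdot>\<^sub>v (H *\<^sub>v z j)"
    using B j H z[OF j] unfolding orthonormal_eigenbasis_def by (simp add: mult_mat_vec)
  finally show "A *\<^sub>v (H *\<^sub>v z j) = es ! j \<cdot>\<^sub>v (H *\<^sub>v z j)" .
  fix l assume l: "l < n"
  have "(H *\<^sub>v z j) \<bullet> (H *\<^sub>v z l) = (transpose_mat H *\<^sub>v (H *\<^sub>v z j)) \<bullet> z l"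
    using H z[OF j] z[OF l] by (simp add: transpose_vec_mult_scalar[of H n n])
  also have "\<dots> = z j \<bullet> z l"
    using H z[OF j] unfolding symmetric_mat_def by (simp add: assoc_mult_mat_vec[of _ n n _ n, symmetric])
  finally show "(H *\<^sub>v z j) \<bullet> (H *\<^sub>v z l) = of_bool (j = l)"
    using B j l unfolding orthonormal_eigenbasis_def orthonormal_system_def by simp
qed (use B in \<open>simp add: orthonormal_eigenbasis_def\<close>)

lemma col_householder_conj:
  assumes A: "A \<in> carrier_mat n n" and v: "v \<in> carrier_vec n" "v \<bullet> v = 1" "A *\<^sub>v v = e \<cdot>\<^sub>v v"
    and n: "0 < n"
  shows "col (householder n v * A * householder n v) 0 = e \<cdot>\<^sub>v unit_vec n 0"
proof -
  let ?H = "householder n v"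
  have H: "?H \<in> carrier_mat n n" by (rule householder_carrier)
  have "col (?H * A * ?H) 0 = (?H * A) *\<^sub>v col ?H 0"
    by (rule col_mult2) (use H A n in auto)
  also have "\<dots> = ?H *\<^sub>v (A *\<^sub>v v)"
    using H A v n by (simp add: col_householder)
  also have "\<dots> = e \<cdot>\<^sub>v (?H *\<^sub>v v)"
    using H v by (simp add: mult_mat_vec)
  also have "?H *\<^sub>v v = col (?H * ?H) 0"
    using col_mult2[OF H H n] col_householder[OF v(1,2) n] by simp
  also have "\<dots> = unit_vec n 0"
    using n v by (simp add: householder_involution)
  finally show ?thesis .
qed

lemma symmetric_mat_first_col_block:
  fixes A :: "real mat"
  assumes A: "A \<in> carrier_mat (Suc k) (Suc k)" "symmetric_mat A"
    and col: "col A 0 = e \<cdot>\<^sub>v unit_vec (Suc k) 0"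
  shows "A = four_block_mat (mat 1 1 (\<lambda>_. e)) (0\<^sub>m 1 k) (0\<^sub>m k 1) (mat k k (\<lambda>(i,j). A $$ (Suc i, Suc j)))"
    (is "A = ?M")
proof (rule eq_matI)
  have A0: "A $$ (i,0) = (if i = 0 then e else 0)" if "i < Suc k" for i
    using arg_cong[OF col, of "\<lambda>w. w $ i"] A that by auto
  fix i j assume "i < dim_row ?M" "j < dim_col ?M"
  hence i: "i < Suc k" and j: "j < Suc k" by auto
  show "A $$ (i,j) = ?M $$ (i,j)"
    using A0[OF i] A0[OF j] symmetric_matD[OF A i j] i j
    by (cases i; cases j) auto
qed (use A in auto)

lemma smult_append_vec: "a \<cdot>\<^sub>v (v @\<^sub>v w) = (a \<cdot>\<^sub>v v) @\<^sub>v (a \<cdot>\<^sub>v w)"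
  by (intro eq_vecI) auto

lemma orthonormal_eigenbasis_block:
  assumes D: "D \<in> carrier_mat k k" and B: "orthonormal_eigenbasis D k u es"
  shows "\<exists>z. orthonormal_eigenbasis (four_block_mat (mat 1 1 (\<lambda>_. e)) (0\<^sub>m 1 k) (0\<^sub>m k 1) D) (Suc k) z (e # es)"
    (is "\<exists>z. orthonormal_eigenbasis ?M _ z _")
proof -
  have u: "u l \<in> carrier_vec k" "D *\<^sub>v u l = es ! l \<cdot>\<^sub>v u l" if "l < k" for l
    using B that unfolding orthonormal_eigenbasis_def orthonormal_system_def by auto
  have uu: "u l \<bullet> u l' = of_bool (l = l')" if "l < k" "l' < k" for l l'
    using B that unfolding orthonormal_eigenbasis_def orthonormal_system_def by auto
  have e: "mat 1 1 (\<lambda>_. e) \<in> carrier_mat 1 1" by simp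
  define z where "z j = (case j of 0 \<Rightarrow> unit_vec 1 0 @\<^sub>v 0\<^sub>v k | Suc l \<Rightarrow> 0\<^sub>v 1 @\<^sub>v u l)" for j
  have z: "z j \<in> carrier_vec (Suc k)" if "j < Suc k" for j
    using that u(1)[THEN carrier_vecD] by (cases j) (auto simp: z_def intro!: carrier_vecI)
  have "z j \<bullet> z l = of_bool (j = l)" if "j < Suc k" "l < Suc k" for j l
    using that u uu by (cases j; cases l) (simp_all add: z_def scalar_prod_append[of _ 1 _ k])
  moreover have "?M *\<^sub>v z j = (e # es) ! j \<cdot>\<^sub>v z j"
    if "j < Suc k" for j
  proof (cases j)
    case 0
    have "mat 1 1 (\<lambda>_. e) *\<^sub>v unit_vec 1 0 = e \<cdot>\<^sub>v unit_vec 1 0"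
      by (intro eq_vecI) (auto simp: scalar_prod_def)
    moreover have "D *\<^sub>v 0\<^sub>v k = e \<cdot>\<^sub>v 0\<^sub>v k"
      using D by (intro eq_vecI) auto
    moreover have "?M *\<^sub>v z j = (mat 1 1 (\<lambda>_. e) *\<^sub>v unit_vec 1 0) @\<^sub>v (D *\<^sub>v 0\<^sub>v k)"
      unfolding z_def 0 nat.case by (rule mult_mat_vec_split[OF e D]) auto
    ultimately show ?thesis using D by (simp add: 0 z_def smult_append_vec)
  next
    case (Suc l)
    have "?M *\<^sub>v z j = (mat 1 1 (\<lambda>_. e) *\<^sub>v 0\<^sub>v 1) @\<^sub>v (D *\<^sub>v u l)"
      unfolding z_def Suc nat.case using that u[of l] Suc by (intro mult_mat_vec_split[OF e D]) auto
    moreover have "mat 1 1 (\<lambda>_. e) *\<^sub>v 0\<^sub>v 1 = es ! l \<cdot>\<^sub>v 0\<^sub>v 1"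
      by (intro eq_vecI) (auto simp: scalar_prod_def)
    ultimately show ?thesis using that u[of l] Suc by (simp add: z_def smult_append_vec)
  qed
  ultimately have "orthonormal_eigenbasis ?M (Suc k) z (e # es)"
    using z B unfolding orthonormal_eigenbasis_def orthonormal_system_def by simp
  thus ?thesis by blast
qed

lemma char_poly_1x1: "char_poly (mat 1 1 (\<lambda>_. e)) = [:-e, 1:]"
  by (simp add: char_poly_defs det_def sign_def)

theorem symmetric_mat_spectral:
  assumes "A \<in> carrier_mat n n" "symmetric_mat A"
  shows "\<exists>u es. orthonormal_eigenbasis A n u es \<and> char_poly A = (\<Prod>e\<leftarrow>es. [:-e, 1:])"
  using assms
proof (induction n arbitrary: A)
  case 0
  hence "char_poly A = 1"
    using char_poly_upper_triangular[OF "0.prems"(1)] by (simp add: upper_triangular_def diag_mat_def)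
  thus ?case
    by (intro exI[of _ "\<lambda>_. 0\<^sub>v 0"] exI[of _ "[]"]) (simp add: orthonormal_eigenbasis_def orthonormal_system_def)
next
  case (Suc k A)
  obtain e v where v: "v \<in> carrier_vec (Suc k)" "v \<bullet> v = 1" "A *\<^sub>v v = e \<cdot>\<^sub>v v"
    using symmetric_mat_unit_eigenvector[OF Suc.prems] by blast
  define H where "H = householder (Suc k) v"
  have H: "H \<in> carrier_mat (Suc k) (Suc k)" "symmetric_mat H" "H * H = 1\<^sub>m (Suc k)"
    unfolding H_def using householder_carrier symmetric_householder householder_involution[OF v(1)] by auto
  define D where "D = mat k k (\<lambda>(i,j). (H * A * H) $$ (Suc i, Suc j))"
  have HAH: "H * A * H \<in> carrier_mat (Suc k) (Suc k)" "symmetric_mat (H * A * H)"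
    using H Suc.prems symmetric_mat_conj[OF Suc.prems(1) H(1) Suc.prems(2) H(2)] by auto
  have block: "H * A * H = four_block_mat (mat 1 1 (\<lambda>_. e)) (0\<^sub>m 1 k) (0\<^sub>m k 1) D"
    unfolding D_def using symmetric_mat_first_col_block[OF HAH] col_householder_conj[OF Suc.prems(1) v]
    by (simp add: H_def)
  have D: "D \<in> carrier_mat k k" "symmetric_mat D"
    unfolding D_def using symmetric_matD[OF HAH] by (auto intro!: symmetric_matI)
  obtain u es where u: "orthonormal_eigenbasis D k u es" and cp: "char_poly D = (\<Prod>e\<leftarrow>es. [:-e, 1:])"
    using Suc.IH[OF D] by blast
  have "char_poly A = char_poly (mat 1 1 (\<lambda>_. e)) * char_poly D"
    unfolding char_poly_involution_conj[OF Suc.prems(1) H(1,3), symmetric] block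
    by (rule char_poly_four_block_zeros_col) (use D in auto)
  hence cpA: "char_poly A = (\<Prod>x\<leftarrow>e # es. [:-x, 1:])"
    by (simp only: char_poly_1x1 cp list.map(2) prod_list.Cons)
  obtain z where "orthonormal_eigenbasis (H * A * H) (Suc k) z (e # es)"
    using orthonormal_eigenbasis_block[OF D(1) u] unfolding block by blast
  hence "orthonormal_eigenbasis A (Suc k) (\<lambda>j. H *\<^sub>v z j) (e # es)"
    by (rule orthonormal_eigenbasis_conj[OF Suc.prems(1) H])
  with cpA show ?case
    by (intro exI conjI)
qed

section \<open>Cauchy interlacing\<close>

definition mat_eigs_desc :: "real mat \<Rightarrow> real list" where
  "mat_eigs_desc A = rev (sorted_list_of_multiset (proots (char_poly A)))"

lemma mat_eigs_desc_antimono: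
  assumes "j \<le> l" "l < length (mat_eigs_desc A)"
  shows "mat_eigs_desc A ! l \<le> mat_eigs_desc A ! j"
proof -
  let ?xs = "sorted_list_of_multiset (proots (char_poly A))"
  have "sorted ?xs" by simp
  moreover have "length ?xs - Suc l \<le> length ?xs - Suc j" "length ?xs - Suc j < length ?xs"
    using assms by (auto simp: mat_eigs_desc_def)
  ultimately show ?thesis
    using assms by (simp add: mat_eigs_desc_def rev_nth sorted_nth_mono)
qed

lemma proots_linear_factors: "proots (\<Prod>e\<leftarrow>es. [:-e, 1:]) = mset (es :: real list)"
proof -
  have "0 \<notin> set (map (\<lambda>e. [:-e, 1:]) es)"
    by (auto simp: eq_commute[of 0])
  thus ?thesis
    using proots_prod_list[of "map (\<lambda>e. [:-e, 1:]) es"] by (simp add: o_def)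
qed

lemma orthonormal_eigenbasis_permute:
  assumes p: "p permutes {..<n}" and B: "orthonormal_eigenbasis A n u es"
  shows "orthonormal_eigenbasis A n (u \<circ> p) (permute_list p es)"
proof -
  have pn: "p j < n" if "j < n" for j
    using permutes_in_image[OF p] that by simp
  have "p j = p l \<longleftrightarrow> j = l" for j l
    using permutes_inj[OF p] by (auto dest: injD)
  moreover have "permute_list p es ! j = es ! p j" if "j < n" for j
    using B p that by (simp add: orthonormal_eigenbasis_def permute_list_nth)
  ultimately show ?thesis
    using B pn unfolding orthonormal_eigenbasis_def orthonormal_system_def by auto
qed

lemma symmetric_mat_sorted_eigenbasis:
  assumes "A \<in> carrier_mat n n" "symmetric_mat A"
  obtains u where "orthonormal_eigenbasis A n u (mat_eigs_desc A)"
proof -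
  obtain u es where B: "orthonormal_eigenbasis A n u es" and cp: "char_poly A = (\<Prod>e\<leftarrow>es. [:-e, 1:])"
    using symmetric_mat_spectral[OF assms] by blast
  have "mset (mat_eigs_desc A) = mset es"
    unfolding mat_eigs_desc_def cp proots_linear_factors by simp
  then obtain p where p: "p permutes {..<length es}" "permute_list p es = mat_eigs_desc A"
    by (rule mset_eq_permutation)
  have "length es = n"
    using B by (simp add: orthonormal_eigenbasis_def)
  hence "orthonormal_eigenbasis A n (u \<circ> p) (permute_list p es)"
    using orthonormal_eigenbasis_permute[OF _ B] p(1) by simp
  thus ?thesis
    using p(2) that by simp
qed

definition lincomb_vec :: "nat \<Rightarrow> (nat \<Rightarrow> real) \<Rightarrow> nat set \<Rightarrow> (nat \<Rightarrow> real vec) \<Rightarrow> real vec" where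
  "lincomb_vec n c J u = vec n (\<lambda>r. \<Sum>j\<in>J. c j * u j $ r)"

lemma lincomb_vec_carrier [simp]: "lincomb_vec n c J u \<in> carrier_vec n"
  unfolding lincomb_vec_def by simp

lemma scalar_prod_lincomb_vec:
  assumes v: "v \<in> carrier_vec n" and u: "\<And>j. j \<in> J \<Longrightarrow> u j \<in> carrier_vec n"
  shows "v \<bullet> lincomb_vec n c J u = (\<Sum>j\<in>J. c j * (v \<bullet> u j))"
proof -
  have "v \<bullet> lincomb_vec n c J u = (\<Sum>r<n. \<Sum>j\<in>J. c j * (v $ r * u j $ r))"
    by (simp add: scalar_prod_carrier[of _ n] lincomb_vec_def sum_distrib_left mult_ac)
  also have "\<dots> = (\<Sum>j\<in>J. c j * (v \<bullet> u j))"
    using u by (simp add: sum.swap[of _ J] scalar_prod_carrier[of _ n] sum_distrib_left)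
  finally show ?thesis .
qed

lemma scalar_prod_lincomb_vec_orthonormal:
  assumes u: "orthonormal_system n u" and J: "J \<subseteq> {..<n}"
  shows "lincomb_vec n c J u \<bullet> lincomb_vec n d J u = (\<Sum>j\<in>J. c j * d j)"
proof -
  have uJ: "j \<in> J \<Longrightarrow> u j \<in> carrier_vec n" for j
    using J orthonormal_system_carrier[OF u] by blast
  have uu: "u l \<bullet> u j = of_bool (l = j)" if "l \<in> J" "j \<in> J" for l j
    using u J that unfolding orthonormal_system_def by blast
  have "u l \<bullet> lincomb_vec n c J u = c l" if "l \<in> J" for l
  proof -
    have "u l \<bullet> lincomb_vec n c J u = (\<Sum>j\<in>J. c j * of_bool (l = j))"
      using uJ that by (simp add: scalar_prod_lincomb_vec uu)
    thus ?thesis using that J finite_subset[OF J] by simp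
  qed
  moreover have "lincomb_vec n c J u \<bullet> u l = u l \<bullet> lincomb_vec n c J u" if "l \<in> J" for l
    using uJ[OF that] by (simp add: comm_scalar_prod[of _ n])
  ultimately show ?thesis
    using uJ by (simp add: scalar_prod_lincomb_vec mult.commute)
qed

lemma mult_mat_vec_lincomb_vec:
  assumes A: "A \<in> carrier_mat n n" and B: "orthonormal_eigenbasis A n u es" and J: "J \<subseteq> {..<n}"
  shows "A *\<^sub>v lincomb_vec n c J u = lincomb_vec n (\<lambda>j. c j * es ! j) J u"
proof (rule eq_vecI)
  have u: "j \<in> J \<Longrightarrow> u j \<in> carrier_vec n" "j \<in> J \<Longrightarrow> A *\<^sub>v u j = es ! j \<cdot>\<^sub>v u j" for j
    using B J unfolding orthonormal_eigenbasis_def orthonormal_system_def by auto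
  fix r assume "r < dim_vec (lincomb_vec n (\<lambda>j. c j * es ! j) J u)"
  hence r: "r < n" by (simp add: lincomb_vec_def)
  have "(A *\<^sub>v lincomb_vec n c J u) $ r = row A r \<bullet> lincomb_vec n c J u"
    using A r by simp
  also have "\<dots> = (\<Sum>j\<in>J. c j * (row A r \<bullet> u j))"
    using A r u(1) by (simp add: scalar_prod_lincomb_vec[of _ n])
  also have "\<dots> = lincomb_vec n (\<lambda>j. c j * es ! j) J u $ r"
  proof -
    have "row A r \<bullet> u j = es ! j * u j $ r" if "j \<in> J" for j
      using arg_cong[OF u(2)[OF that], of "\<lambda>v. v $ r"] A r u(1)[OF that] by simp
    thus ?thesis using r by (auto simp: lincomb_vec_def mult_ac intro!: sum.cong)
  qed
  finally show "(A *\<^sub>v lincomb_vec n c J u) $ r = lincomb_vec n (\<lambda>j. c j * es ! j) J u $ r" .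
qed (use A in \<open>simp add: lincomb_vec_def\<close>)

lemma rayleigh_lincomb_vec:
  fixes c :: "nat \<Rightarrow> real"
  assumes A: "A \<in> carrier_mat n n" and B: "orthonormal_eigenbasis A n u es" and J: "J \<subseteq> {..<n}"
  defines "x \<equiv> lincomb_vec n c J u"
  shows "(\<And>j. j \<in> J \<Longrightarrow> es ! j \<le> \<alpha>) \<Longrightarrow> x \<bullet> (A *\<^sub>v x) \<le> \<alpha> * (x \<bullet> x)"
    and "(\<And>j. j \<in> J \<Longrightarrow> \<alpha> \<le> es ! j) \<Longrightarrow> \<alpha> * (x \<bullet> x) \<le> x \<bullet> (A *\<^sub>v x)"
proof -
  have u: "orthonormal_system n u" using B by (simp add: orthonormal_eigenbasis_def)
  have quad: "x \<bullet> (A *\<^sub>v x) = (\<Sum>j\<in>J. es ! j * (c j * c j))"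
    unfolding x_def mult_mat_vec_lincomb_vec[OF A B J] scalar_prod_lincomb_vec_orthonormal[OF u J]
    by (simp add: mult_ac)
  have norm: "\<alpha> * (x \<bullet> x) = (\<Sum>j\<in>J. \<alpha> * (c j * c j))"
    unfolding x_def scalar_prod_lincomb_vec_orthonormal[OF u J] by (simp add: sum_distrib_left)
  show "(\<And>j. j \<in> J \<Longrightarrow> es ! j \<le> \<alpha>) \<Longrightarrow> x \<bullet> (A *\<^sub>v x) \<le> \<alpha> * (x \<bullet> x)"
    unfolding quad norm by (intro sum_mono mult_right_mono) auto
  show "(\<And>j. j \<in> J \<Longrightarrow> \<alpha> \<le> es ! j) \<Longrightarrow> \<alpha> * (x \<bullet> x) \<le> x \<bullet> (A *\<^sub>v x)"
    unfolding quad norm by (intro sum_mono mult_right_mono) auto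
qed

definition principal_submat :: "nat \<Rightarrow> (nat \<Rightarrow> nat) \<Rightarrow> 'a mat \<Rightarrow> 'a mat" where
  "principal_submat k f A = mat k k (\<lambda>(s,t). A $$ (f s, f t))"

definition extend_vec :: "nat \<Rightarrow> nat \<Rightarrow> (nat \<Rightarrow> nat) \<Rightarrow> real vec \<Rightarrow> real vec" where
  "extend_vec n k f y = vec n (\<lambda>r. \<Sum>a<k. if f a = r then y $ a else 0)"

lemma extend_vec_carrier [simp]: "extend_vec n k f y \<in> carrier_vec n"
  unfolding extend_vec_def by simp

lemma index_extend_vec:
  assumes "inj_on f {..<k}" "f ` {..<k} \<subseteq> {..<n}" "a < k"
  shows "extend_vec n k f y $ f a = y $ a"
proof -
  have "(\<Sum>b<k. if f b = f a then y $ b else 0) = (\<Sum>b<k. if b = a then y $ b else 0)"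
    using assms by (intro sum.cong) (auto dest: inj_onD)
  thus ?thesis using assms by (auto simp: extend_vec_def)
qed

lemma sum_extend_vec:
  assumes "f ` {..<k} \<subseteq> {..<n}"
  shows "(\<Sum>r<n. extend_vec n k f y $ r * g r) = (\<Sum>a<k. y $ a * g (f a))"
proof -
  have "(\<Sum>r<n. extend_vec n k f y $ r * g r) = (\<Sum>r<n. \<Sum>a<k. if f a = r then y $ a * g r else 0)"
    unfolding extend_vec_def by (auto simp: sum_distrib_right intro!: sum.cong)
  also have "\<dots> = (\<Sum>a<k. \<Sum>r<n. if f a = r then y $ a * g r else 0)"
    by (rule sum.swap)
  also have "\<dots> = (\<Sum>a<k. y $ a * g (f a))"
    using assms by (intro sum.cong) (auto simp: sum.delta')
  finally show ?thesis .
qed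

lemma scalar_prod_extend_vec:
  assumes f: "inj_on f {..<k}" "f ` {..<k} \<subseteq> {..<n}" and z: "z \<in> carrier_vec k"
  shows "extend_vec n k f y \<bullet> extend_vec n k f z = y \<bullet> z"
  using sum_extend_vec[OF f(2), of y "\<lambda>r. extend_vec n k f z $ r"] index_extend_vec[OF f] z
  by (simp add: scalar_prod_carrier[of _ n] scalar_prod_carrier[OF z])

lemma quadratic_form_extend_vec:
  assumes A: "A \<in> carrier_mat n n" and f: "inj_on f {..<k}" "f ` {..<k} \<subseteq> {..<n}"
    and y: "y \<in> carrier_vec k"
  shows "extend_vec n k f y \<bullet> (A *\<^sub>v extend_vec n k f y) = y \<bullet> (principal_submat k f A *\<^sub>v y)"
proof -
  let ?x = "extend_vec n k f y" and ?B = "principal_submat k f A"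
  have B: "?B \<in> carrier_mat k k" by (simp add: principal_submat_def)
  have Ax: "(A *\<^sub>v ?x) $ f a = (?B *\<^sub>v y) $ a" if "a < k" for a
  proof -
    have "f a < n" using f that by auto
    hence "(A *\<^sub>v ?x) $ f a = (\<Sum>r<n. ?x $ r * A $$ (f a, r))"
      using A by (simp add: scalar_prod_carrier[of _ n] mult.commute)
    also have "\<dots> = (\<Sum>b<k. y $ b * A $$ (f a, f b))"
      by (rule sum_extend_vec[OF f(2)])
    finally show ?thesis
      using that y by (simp add: principal_submat_def scalar_prod_carrier[OF y] mult.commute)
  qed
  have "?x \<bullet> (A *\<^sub>v ?x) = (\<Sum>r<n. ?x $ r * (A *\<^sub>v ?x) $ r)"
    using A by (simp add: scalar_prod_carrier[of _ n])
  also have "\<dots> = (\<Sum>a<k. y $ a * (A *\<^sub>v ?x) $ f a)"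
    by (rule sum_extend_vec[OF f(2)])
  also have "\<dots> = (\<Sum>a<k. y $ a * (?B *\<^sub>v y) $ a)"
    using Ax by simp
  also have "\<dots> = y \<bullet> (?B *\<^sub>v y)"
    using B y by (simp add: scalar_prod_carrier[of _ k])
  finally show ?thesis .
qed

lemma extend_vec_lincomb_vec:
  "extend_vec n k f (lincomb_vec k d L w) = lincomb_vec n d L (\<lambda>l. extend_vec n k f (w l))"
proof (rule eq_vecI)
  fix r assume "r < dim_vec (lincomb_vec n d L (\<lambda>l. extend_vec n k f (w l)))"
  hence r: "r < n" by (simp add: lincomb_vec_def)
  have "extend_vec n k f (lincomb_vec k d L w) $ r = (\<Sum>a<k. \<Sum>l\<in>L. if f a = r then d l * w l $ a else 0)"
    using r by (auto simp: extend_vec_def lincomb_vec_def intro!: sum.cong)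
  also have "\<dots> = (\<Sum>l\<in>L. \<Sum>a<k. if f a = r then d l * w l $ a else 0)"
    by (rule sum.swap)
  also have "\<dots> = lincomb_vec n d L (\<lambda>l. extend_vec n k f (w l)) $ r"
    using r by (auto simp: extend_vec_def lincomb_vec_def sum_distrib_left intro!: sum.cong)
  finally show "extend_vec n k f (lincomb_vec k d L w) $ r = lincomb_vec n d L (\<lambda>l. extend_vec n k f (w l)) $ r" .
qed (simp add: extend_vec_def lincomb_vec_def)

text \<open>Padded with zero rows, the matrix having the vectors as columns is square with a zero
  row, hence singular.\<close>

lemma exists_nontrivial_linear_relation:
  fixes z :: "'b \<Rightarrow> real vec"
  assumes T: "finite T" "n < card T" and z: "\<And>t. t \<in> T \<Longrightarrow> z t \<in> carrier_vec n"
  obtains g where "\<exists>t\<in>T. g t \<noteq> 0" "\<And>r. r < n \<Longrightarrow> (\<Sum>t\<in>T. g t * z t $ r) = 0"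
proof -
  define N where "N = card T"
  obtain h where h: "bij_betw h {..<N} T"
    using ex_bij_betw_nat_finite[OF T(1)] unfolding N_def atLeast0LessThan by blast
  define M where "M = mat N N (\<lambda>(r,s). if r < n then z (h s) $ r else 0)"
  have M: "M \<in> carrier_mat N N" unfolding M_def by simp
  have "det M = 0"
  proof -
    have "(\<Prod>i\<in>{0..<N}. M $$ (i, p i)) = 0" if "p permutes {0..<N}" for p
      using T that by (intro prod_zero bexI[of _ n]) (auto simp: M_def N_def permutes_in_image)
    thus ?thesis unfolding det_def using M by (auto intro!: sum.neutral)
  qed
  then obtain v where v: "v \<in> carrier_vec N" "v \<noteq> 0\<^sub>v N" "M *\<^sub>v v = 0\<^sub>v N"
    using det_0_iff_vec_prod_zero_field[OF M] by blast
  define g where "g t = v $ inv_into {..<N} h t" for t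
  have gh: "g (h s) = v $ s" if "s < N" for s
    using bij_betw_inv_into_left[OF h] that by (simp add: g_def)
  show ?thesis
  proof
    obtain s where "s < N" "v $ s \<noteq> 0"
      using v(1,2) by (metis eq_vecI index_zero_vec(1,2) carrier_vecD)
    thus "\<exists>t\<in>T. g t \<noteq> 0" using gh bij_betwE[OF h] by force
  next
    fix r assume r: "r < n"
    have "(\<Sum>t\<in>T. g t * z t $ r) = (\<Sum>s<N. g (h s) * z (h s) $ r)"
      using sum.reindex_bij_betw[OF h, of "\<lambda>t. g t * z t $ r"] by simp
    also have "\<dots> = (M *\<^sub>v v) $ r"
      using M v(1) r T gh by (simp add: M_def N_def scalar_prod_carrier[of _ N] mult.commute)
    finally show "(\<Sum>t\<in>T. g t * z t $ r) = 0"
      using v(3) r T by (simp add: N_def)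
  qed
qed

lemma exists_common_lincomb_vec:
  assumes fin: "finite J" "finite L" and card: "n < card J + card L"
    and u: "\<And>j. j \<in> J \<Longrightarrow> u j \<in> carrier_vec n" and v: "\<And>l. l \<in> L \<Longrightarrow> v l \<in> carrier_vec n"
  obtains c d where "lincomb_vec n c J u = lincomb_vec n d L v" and "(\<exists>j\<in>J. c j \<noteq> 0) \<or> (\<exists>l\<in>L. d l \<noteq> 0)"
proof -
  define T where "T = Inl ` J \<union> Inr ` L"
  define z where "z t = (case t of Inl j \<Rightarrow> u j | Inr l \<Rightarrow> v l)" for t
  have card_T: "card T = card J + card L"
    unfolding T_def using fin by (subst card_Un_disjoint) (auto simp: card_image)
  have z: "z t \<in> carrier_vec n" if "t \<in> T" for t
    using that u v by (auto simp: T_def z_def)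
  obtain g where g: "\<exists>t\<in>T. g t \<noteq> 0" and rel: "\<And>r. r < n \<Longrightarrow> (\<Sum>t\<in>T. g t * z t $ r) = 0"
    by (rule exists_nontrivial_linear_relation[of T n z]) (use card card_T fin z in \<open>auto simp: T_def\<close>)
  define c where "c j = g (Inl j)" for j
  define d where "d l = - g (Inr l)" for l
  have "(\<Sum>t\<in>T. g t * z t $ r) = lincomb_vec n c J u $ r - lincomb_vec n d L v $ r" if "r < n" for r
  proof -
    have "(\<Sum>t\<in>T. g t * z t $ r) = (\<Sum>t\<in>Inl ` J. g t * z t $ r) + (\<Sum>t\<in>Inr ` L. g t * z t $ r)"
      unfolding T_def by (rule sum.union_disjoint) (use fin in auto)
    thus ?thesis
      using that by (simp add: sum.reindex lincomb_vec_def c_def d_def z_def sum_negf)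
  qed
  hence "lincomb_vec n c J u = lincomb_vec n d L v"
    using rel by (intro eq_vecI) (auto simp: lincomb_vec_def)
  moreover have "(\<exists>j\<in>J. c j \<noteq> 0) \<or> (\<exists>l\<in>L. d l \<noteq> 0)"
    using g by (auto simp: T_def c_def d_def)
  ultimately show ?thesis using that by blast
qed

lemma interlacing_witness:
  assumes f: "inj_on f {..<k}" "f ` {..<k} \<subseteq> {..<n}"
    and u: "orthonormal_system n u" and w: "orthonormal_system k w"
    and J: "J \<subseteq> {..<n}" and L: "L \<subseteq> {..<k}" and card: "n < card J + card L"
  obtains c d where "lincomb_vec n c J u = extend_vec n k f (lincomb_vec k d L w)"
    and "lincomb_vec n c J u \<noteq> 0\<^sub>v n"
proof -
  have fin: "finite J" "finite L"
    using J L finite_subset by blast+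
  obtain c d where cd: "lincomb_vec n c J u = lincomb_vec n d L (\<lambda>l. extend_vec n k f (w l))"
    and nonzero: "(\<exists>j\<in>J. c j \<noteq> 0) \<or> (\<exists>l\<in>L. d l \<noteq> 0)"
    by (rule exists_common_lincomb_vec[OF fin card]) (use J orthonormal_system_carrier[OF u] in auto)
  define y where "y = lincomb_vec k d L w"
  have xy: "lincomb_vec n c J u = extend_vec n k f y"
    unfolding y_def extend_vec_lincomb_vec cd ..
  moreover have "lincomb_vec n c J u \<noteq> 0\<^sub>v n"
  proof
    assume x0: "lincomb_vec n c J u = 0\<^sub>v n"
    have "(\<Sum>j\<in>J. c j * c j) = 0"
      using scalar_prod_lincomb_vec_orthonormal[OF u J, of c c] x0 by simp
    hence "\<forall>j\<in>J. c j = 0"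
      using sum_nonneg_eq_0_iff[OF fin(1), of "\<lambda>j. c j * c j"] by simp
    moreover have "extend_vec n k f y = 0\<^sub>v n"
      using xy x0 by simp
    hence "(\<Sum>l\<in>L. d l * d l) = 0"
      using scalar_prod_lincomb_vec_orthonormal[OF w L, of d d] scalar_prod_extend_vec[OF f, of y y]
      by (simp add: y_def)
    hence "\<forall>l\<in>L. d l = 0"
      using sum_nonneg_eq_0_iff[OF fin(2), of "\<lambda>l. d l * d l"] by simp
    ultimately show False
      using nonzero by blast
  qed
  ultimately show ?thesis
    using that unfolding y_def by blast
qed

lemma interlacing_comparison:
  assumes A: "A \<in> carrier_mat n n" and f: "inj_on f {..<k}" "f ` {..<k} \<subseteq> {..<n}"
    and u: "orthonormal_eigenbasis A n u es" and w: "orthonormal_eigenbasis (principal_submat k f A) k w ds"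
    and J: "J \<subseteq> {..<n}" and L: "L \<subseteq> {..<k}" and card: "n < card J + card L"
  shows "(\<And>j. j \<in> J \<Longrightarrow> es ! j \<le> \<alpha>) \<Longrightarrow> (\<And>l. l \<in> L \<Longrightarrow> \<beta> \<le> ds ! l) \<Longrightarrow> \<beta> \<le> \<alpha>"
    and "(\<And>j. j \<in> J \<Longrightarrow> \<alpha> \<le> es ! j) \<Longrightarrow> (\<And>l. l \<in> L \<Longrightarrow> ds ! l \<le> \<beta>) \<Longrightarrow> \<alpha> \<le> \<beta>"
proof -
  let ?B = "principal_submat k f A"
  have B: "?B \<in> carrier_mat k k" by (simp add: principal_submat_def)
  obtain c d where xy: "lincomb_vec n c J u = extend_vec n k f (lincomb_vec k d L w)"
    and x0: "lincomb_vec n c J u \<noteq> 0\<^sub>v n"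
    using interlacing_witness[OF f _ _ J L card] u w unfolding orthonormal_eigenbasis_def by blast
  define x where "x = lincomb_vec n c J u"
  define y where "y = lincomb_vec k d L w"
  have xx: "x \<bullet> x = y \<bullet> y"
    using scalar_prod_extend_vec[OF f, of y y] xy by (simp add: x_def y_def)
  have quad: "x \<bullet> (A *\<^sub>v x) = y \<bullet> (?B *\<^sub>v y)"
    using quadratic_form_extend_vec[OF A f, of y] xy by (simp add: x_def y_def)
  have pos: "x \<bullet> x > 0"
    using x0 real_scalar_prod_self_nonneg[of x] real_scalar_prod_self_eq_0[of x n]
    by (fastforce simp: x_def)
  note rayA = rayleigh_lincomb_vec[OF A u J, where c = c, folded x_def]
  note rayB = rayleigh_lincomb_vec[OF B w L, where c = d, folded y_def, folded xx]
  show "\<beta> \<le> \<alpha>" if "\<And>j. j \<in> J \<Longrightarrow> es ! j \<le> \<alpha>" "\<And>l. l \<in> L \<Longrightarrow> \<beta> \<le> ds ! l"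
  proof -
    have "\<beta> * (x \<bullet> x) \<le> \<alpha> * (x \<bullet> x)"
      using rayA(1)[OF that(1)] rayB(2)[OF that(2)] quad by linarith
    thus ?thesis by (simp add: mult_le_cancel_right_pos[OF pos])
  qed
  show "\<alpha> \<le> \<beta>" if "\<And>j. j \<in> J \<Longrightarrow> \<alpha> \<le> es ! j" "\<And>l. l \<in> L \<Longrightarrow> ds ! l \<le> \<beta>"
  proof -
    have "\<alpha> * (x \<bullet> x) \<le> \<beta> * (x \<bullet> x)"
      using rayA(2)[OF that(1)] rayB(1)[OF that(2)] quad by linarith
    thus ?thesis by (simp add: mult_le_cancel_right_pos[OF pos])
  qed
qed

theorem cauchy_interlacing:
  assumes A: "A \<in> carrier_mat n n" "symmetric_mat A"
    and f: "inj_on f {..<k}" "f ` {..<k} \<subseteq> {..<n}" and i: "i < k"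
  shows "mat_eigs_desc (principal_submat k f A) ! i \<le> mat_eigs_desc A ! i"
    and "mat_eigs_desc A ! (n - k + i) \<le> mat_eigs_desc (principal_submat k f A) ! i"
proof -
  let ?B = "principal_submat k f A"
  have kn: "k \<le> n" using card_inj_on_le[OF f] by simp
  have B: "?B \<in> carrier_mat k k" "symmetric_mat ?B"
    using symmetric_matD[OF A] f by (auto simp: principal_submat_def image_subset_iff intro!: symmetric_matI)
  obtain u where u: "orthonormal_eigenbasis A n u (mat_eigs_desc A)"
    using symmetric_mat_sorted_eigenbasis[OF A] by blast
  obtain w where w: "orthonormal_eigenbasis ?B k w (mat_eigs_desc ?B)"
    using symmetric_mat_sorted_eigenbasis[OF B] by blast
  have len: "length (mat_eigs_desc A) = n" "length (mat_eigs_desc ?B) = k"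
    using u w by (simp_all add: orthonormal_eigenbasis_def)
  note compare = interlacing_comparison[OF A(1) f u w]
  show "mat_eigs_desc ?B ! i \<le> mat_eigs_desc A ! i"
    by (rule compare(1)[of "{i..<n}" "{..i}"])
      (use i kn len in \<open>auto intro: mat_eigs_desc_antimono\<close>)
  show "mat_eigs_desc A ! (n - k + i) \<le> mat_eigs_desc ?B ! i"
    by (rule compare(2)[of "{..n - k + i}" "{i..<k}"])
      (use i kn len in \<open>auto intro: mat_eigs_desc_antimono\<close>)
qed

section \<open>Blocks and the Helmholtzian\<close>

lemma connected_on_insert:
  assumes S: "connected_on E S" and x: "x \<in> S" and e: "{x, w} \<in> E"
  shows "connected_on E (insert w S)"
proof -
  let ?R = "\<lambda>S. {(u, v). u \<in> S \<and> v \<in> S \<and> {u, v} \<in> E}"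
  have in_S: "(p, q) \<in> (?R (insert w S))\<^sup>*" if "p \<in> S" "q \<in> S" for p q
    using S that rtrancl_mono[of "?R S" "?R (insert w S)"] unfolding connected_on_def by blast
  have xw: "(x, w) \<in> ?R (insert w S)" and wx: "(w, x) \<in> ?R (insert w S)"
    using x e by (auto simp: insert_commute)
  have to_w: "(p, w) \<in> (?R (insert w S))\<^sup>*" if "p \<in> S" for p
    by (rule rtrancl_into_rtrancl[OF in_S[OF that x] xw])
  have from_w: "(w, p) \<in> (?R (insert w S))\<^sup>*" if "p \<in> S" for p
    by (rule converse_rtrancl_into_rtrancl[OF wx in_S[OF x that]])
  show ?thesis
    unfolding connected_on_def
  proof (intro conjI ballI)
    fix p q assume "p \<in> insert w S" "q \<in> insert w S"
    thus "(p, q) \<in> (?R (insert w S))\<^sup>*"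
      using in_S to_w from_w by (cases "p = w"; cases "q = w") auto
  qed simp
qed

lemma block_common_neighbour:
  assumes B: "is_block V E B" and G: "simple_graph V E"
    and ab: "a \<in> B" "b \<in> B" "a \<noteq> b" and w: "{a, w} \<in> E" "{b, w} \<in> E"
  shows "w \<in> B"
proof (rule ccontr)
  assume wB: "w \<notin> B"
  have BV: "B \<subseteq> V" and conn: "connected_on E B" and no_cut: "no_cut_vertex E B"
    and max: "\<And>T. B \<subset> T \<Longrightarrow> T \<subseteq> V \<Longrightarrow> \<not> (connected_on E T \<and> no_cut_vertex E T)"
    using B unfolding is_block_def by auto
  have "no_cut_vertex E (insert w B)"
    unfolding no_cut_vertex_def
  proof (intro ballI impI)
    fix x assume x: "x \<in> insert w B"
    show "connected_on E (insert w B - {x})"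
    proof (cases "x = w")
      case True
      thus ?thesis using conn wB by simp
    next
      case False
      define y where "y = (if x = a then b else a)"
      have y: "y \<in> B - {x}" "{y, w} \<in> E"
        using ab w by (auto simp: y_def)
      have "connected_on E (B - {x})"
        using no_cut y(1) False x unfolding no_cut_vertex_def by blast
      from connected_on_insert[OF this y] show ?thesis
        using False by (simp add: insert_Diff_if)
    qed
  qed
  moreover have "w \<in> V"
    using G w unfolding simple_graph_def by auto
  ultimately show False
    using max[of "insert w B"] connected_on_insert[OF conn ab(1) w(1)] wB BV by blast
qed

lemma triangle_subset_block:
  assumes B: "is_block V E B" and G: "simple_graph V E" and ab: "a \<in> B" "b \<in> B" "a \<noteq> b"
    and t: "is_triangle E t" "a \<in> t" "b \<in> t"
  shows "t \<subseteq> B"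
proof
  fix x assume x: "x \<in> t"
  show "x \<in> B"
  proof (cases "x = a \<or> x = b")
    case False
    hence "{a, x} \<in> E" "{b, x} \<in> E"
      using t x unfolding is_triangle_def by auto
    thus ?thesis using block_common_neighbour[OF B G ab] by blast
  qed (use ab in auto)
qed

lemma is_triangle_mono: "E' \<subseteq> E \<Longrightarrow> is_triangle E' t \<Longrightarrow> is_triangle E t"
  unfolding is_triangle_def by blast

lemma helm_entry_union_blocks:
  assumes G: "simple_graph V E" and Bs: "\<forall>B\<in>Bs. is_block V E B"
    and edges: "{e \<in> E. \<exists>B\<in>Bs. e \<subseteq> B} = induced_edges E (\<Union>Bs)"
    and e: "e \<in> oriented_edges (induced_edges E (\<Union>Bs))"
  shows "helm_entry (induced_edges E (\<Union>Bs)) e e' = helm_entry E e e'"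
proof -
  let ?E' = "induced_edges E (\<Union>Bs)"
  obtain a b where ab: "e = (a, b)" "{a, b} \<in> ?E'" "a < b"
    using e unfolding oriented_edges_def by auto
  obtain B where B: "B \<in> Bs" "a \<in> B" "b \<in> B"
    using ab(2) edges by blast
  have triangles: "is_triangle ?E' t \<longleftrightarrow> is_triangle E t" if "a \<in> t" "b \<in> t" for t
  proof
    assume "is_triangle E t"
    moreover have "t \<subseteq> B"
      using triangle_subset_block[OF _ G B(2,3) _ \<open>is_triangle E t\<close> that] Bs B(1) ab(3) by blast
    ultimately show "is_triangle ?E' t"
      using B(1) unfolding is_triangle_def induced_edges_def by blast
  qed (erule is_triangle_mono[rotated], auto simp: induced_edges_def)
  have tri: "tri_count ?E' e = tri_count E e"
    unfolding tri_count_def ab(1) using triangles by (metis (no_types, lifting) fst_conv snd_conv)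
  have common: "in_common_triangle ?E' e e'' = in_common_triangle E e e''" for e''
    unfolding in_common_triangle_def ab(1) using triangles by auto
  show ?thesis
    unfolding helm_entry_def tri common ..
qed

lemma bij_betw_oriented_edges:
  assumes "\<forall>e\<in>E. card e = 2"
  shows "bij_betw (\<lambda>(u, v). {u, v}) (oriented_edges E) E"
proof (rule bij_betw_imageI)
  show "inj_on (\<lambda>(u, v). {u, v}) (oriented_edges E)"
    unfolding inj_on_def oriented_edges_def by (auto simp: doubleton_eq_iff)
  show "(\<lambda>(u, v). {u, v}) ` oriented_edges E = E"
  proof
    show "E \<subseteq> (\<lambda>(u, v). {u, v}) ` oriented_edges E"
    proof
      fix e assume e: "e \<in> E"
      obtain x y where "e = {x, y}" "x \<noteq> y"
        using assms e by (auto simp: card_2_iff)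
      hence "e = {min x y, max x y}" "min x y < max x y"
        by (auto simp: min_def max_def insert_commute)
      thus "e \<in> (\<lambda>(u, v). {u, v}) ` oriented_edges E"
        using e unfolding oriented_edges_def by (auto intro!: image_eqI[of _ _ "(min x y, max x y)"])
    qed
  qed (auto simp: oriented_edges_def)
qed

lemma helm_entry_sym: "helm_entry E e e' = helm_entry E e' e"
proof -
  have "in_common_triangle E e e' = in_common_triangle E e' e"
    unfolding in_common_triangle_def by blast
  thus ?thesis
    unfolding helm_entry_def by auto
qed

lemma helmholtzian_carrier:
  "helmholtzian E \<in> carrier_mat (card (oriented_edges E)) (card (oriented_edges E))"
  by (simp add: helmholtzian_def edge_list_def Let_def)

lemma symmetric_helmholtzian: "symmetric_mat (helmholtzian E)"
  by (rule symmetric_matI[OF helmholtzian_carrier])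
    (simp add: helmholtzian_def edge_list_def Let_def helm_entry_sym)

lemma helmholtzian_principal_submat:
  assumes fin: "finite (oriented_edges E)" and sub: "oriented_edges E' \<subseteq> oriented_edges E"
    and entries: "\<And>e e'. e \<in> oriented_edges E' \<Longrightarrow> e' \<in> oriented_edges E' \<Longrightarrow>
      helm_entry E' e e' = helm_entry E e e'"
  obtains f where "inj_on f {..<card (oriented_edges E')}"
    and "f ` {..<card (oriented_edges E')} \<subseteq> {..<card (oriented_edges E)}"
    and "helmholtzian E' = principal_submat (card (oriented_edges E')) f (helmholtzian E)"
proof -
  define es where "es = edge_list E"
  define es' where "es' = edge_list E'"
  let ?n = "card (oriented_edges E)" and ?k = "card (oriented_edges E')"
  have fin': "finite (oriented_edges E')" using fin sub finite_subset by blast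
  have es: "set es = oriented_edges E" "length es = ?n"
    using fin by (simp_all add: es_def edge_list_def)
  have es': "set es' = oriented_edges E'" "distinct es'" "length es' = ?k"
    using fin' by (simp_all add: es'_def edge_list_def)
  have "\<exists>j<?n. es ! j = es' ! s" if "s < ?k" for s
    using that es es' sub by (metis in_set_conv_nth nth_mem subsetD)
  then obtain f where f: "\<And>s. s < ?k \<Longrightarrow> f s < ?n \<and> es ! f s = es' ! s"
    by metis
  show ?thesis
  proof
    show "inj_on f {..<?k}"
      using f es'(2,3) by (intro inj_onI) (metis lessThan_iff nth_eq_iff_index_eq)
    show "f ` {..<?k} \<subseteq> {..<?n}"
      using f by auto
    show "helmholtzian E' = principal_submat ?k f (helmholtzian E)"
    proof (rule eq_matI)
      fix s t assume "s < dim_row (principal_submat ?k f (helmholtzian E))"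
        "t < dim_col (principal_submat ?k f (helmholtzian E))"
      hence s: "s < ?k" and t: "t < ?k" by (simp_all add: principal_submat_def)
      have "helmholtzian E' $$ (s, t) = helm_entry E' (es' ! s) (es' ! t)"
        using s t es' by (simp add: helmholtzian_def es'_def Let_def)
      also have "\<dots> = helm_entry E (es ! f s) (es ! f t)"
        using entries[of "es' ! s" "es' ! t"] nth_mem[of s es'] nth_mem[of t es'] s t f es' by simp
      also have "\<dots> = principal_submat ?k f (helmholtzian E) $$ (s, t)"
        using s t f es by (simp add: principal_submat_def helmholtzian_def es_def Let_def)
      finally show "helmholtzian E' $$ (s, t) = principal_submat ?k f (helmholtzian E) $$ (s, t)" .
    qed (simp_all add: principal_submat_def helmholtzian_def edge_list_def Let_def)
  qed
qed

lemma helm_lambda_eq_mat_eigs_desc: "helm_lambda E i = mat_eigs_desc (helmholtzian E) ! (i - 1)"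
  unfolding helm_lambda_def eigs_desc_def mat_eigs_desc_def ..

theorem corollary4p5:
  fixes V :: "'a::linorder set" and E :: "'a set set" and Bs :: "'a set set" and i :: nat
  assumes "simple_graph V E"
    and "card E \<ge> 1"
    and "\<forall>B\<in>Bs. is_block V E B"
    and "{e \<in> E. \<exists>B\<in>Bs. e \<subseteq> B} = induced_edges E (\<Union>Bs)"
    and "card (induced_edges E (\<Union>Bs)) \<ge> 1"
    and "1 \<le> i" and "i \<le> card (induced_edges E (\<Union>Bs))"
  shows "helm_lambda E i \<ge> helm_lambda (induced_edges E (\<Union>Bs)) i \<and>
         helm_lambda (induced_edges E (\<Union>Bs)) i
           \<ge> helm_lambda E (card E - card (induced_edges E (\<Union>Bs)) + i)"
proof -
  let ?E' = "induced_edges E (\<Union>Bs)"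
  have E: "finite E" "\<forall>e\<in>E. card e = 2"
    using assms(1) unfolding simple_graph_def by (auto intro: finite_subset[of E "Pow V"])
  have E': "?E' \<subseteq> E" by (auto simp: induced_edges_def)
  have card: "card (oriented_edges E) = card E" "card (oriented_edges ?E') = card ?E'"
    using bij_betw_same_card[OF bij_betw_oriented_edges] E E' by auto
  have "finite (oriented_edges E)" "oriented_edges ?E' \<subseteq> oriented_edges E"
    using bij_betw_finite[OF bij_betw_oriented_edges] E E' by (auto simp: oriented_edges_def)
  then obtain f where f: "inj_on f {..<card ?E'}" "f ` {..<card ?E'} \<subseteq> {..<card E}"
    and sub: "helmholtzian ?E' = principal_submat (card ?E') f (helmholtzian E)"
    using helmholtzian_principal_submat helm_entry_union_blocks[OF assms(1,3,4)] card by metis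
  show ?thesis
    using cauchy_interlacing[OF helmholtzian_carrier symmetric_helmholtzian f[folded card], of "i - 1"]
      assms(6,7) by (simp add: helm_lambda_eq_mat_eigs_desc card sub)
qed

end
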